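(* Let $U$ be a finite set, $(T,I,N)$ an IMTL triplet, $\widetilde{R}$ a $T$-preorder relation on $U$, and $A\subseteq U$ a crisp set (identified with its indicator fuzzy set), $coA=U\setminus A$. Let $L:\mathbb{R}\times\mathbb{R}\to\mathbb{R}^+$ be a loss function that is of $\lor$-type, $N$-duality preserving and symmetric. Consider problem (P1): $$\text{minimize }\sum_{u\in U}L(A(u),\hat{A}(u))\ \text{ s.t. } T(\widetilde{R}(u,v),\hat{A}(v))\le\hat{A}(u)\ (u,v\in U),\ 0\le\hat{A}(u)\le1,$$ and problem (P2) in variables $(\beta_u)_{u\in U}$: $$\text{minimize }\sum_{u\in U}L(1,\beta_u)\ \text{ s.t. } T(\beta_u,\beta_v)\le N(\widetilde{R}(v,u))\ (u\in A,\ v\in coA),\ 0\le\beta_u\le1\ (u\in U).$$ Under the correspondence $\beta_u=\hat{A}(u)$ for $u\in A$ and $\beta_u=N(\hat{A}(u))$ for $u\in coA$, problems (P1) and (P2) are equivalent: they have the same optimal value, and $\hat{A}$ is an optimal solution of (P1) if and only if the corresponding $\beta$ is an optimal solution of (P2).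
   Context: A residual triplet $(T,I,N)$ consists of a left-continuous $t$-norm $T$, its residual implicator $I(x,y)=\sup\{\beta\in[0,1]: T(x,\beta)\le y\}$ and $N(x)=I(x,0)$; it is IMTL if $N$ is involutive. $\widetilde{R}:U\times U\to[0,1]$ is a $T$-preorder if reflexive and $T$-transitive. A loss function $L$ is of $\lor$-type if for every real $a$: $L(a,a)=0$; $x\mapsto L(x,a)$ and $x\mapsto L(a,x)$ are increasing for $x>a$ and decreasing for $x<a$. $L$ is symmetric if $L(y,\hat y)=L(\hat y,y)$, and $N$-duality preserving if $L(y,\hat y)=L(N(\hat y),N(y))$ for all $y,\hat y\in[0,1]$. *)

theory Defs
  imports Complex_Main
begin

definition t_norm :: "(real \<Rightarrow> real \<Rightarrow> real) \<Rightarrow> bool" where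
  "t_norm T \<longleftrightarrow>
     (\<forall>x\<in>{0..1}. \<forall>y\<in>{0..1}. T x y \<in> {0..1}) \<and>
     (\<forall>x\<in>{0..1}. \<forall>y\<in>{0..1}. T x y = T y x) \<and>
     (\<forall>x\<in>{0..1}. \<forall>y\<in>{0..1}. \<forall>z\<in>{0..1}. T (T x y) z = T x (T y z)) \<and>
     (\<forall>x\<in>{0..1}. \<forall>y\<in>{0..1}. \<forall>z\<in>{0..1}. y \<le> z \<longrightarrow> T x y \<le> T x z) \<and>
     (\<forall>x\<in>{0..1}. T x 1 = x)"

text \<open>Left-continuity (in the first argument; by commutativity in both).\<close>
definition left_continuous_t_norm :: "(real \<Rightarrow> real \<Rightarrow> real) \<Rightarrow> bool" where
  "left_continuous_t_norm T \<longleftrightarrow> t_norm T \<and>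
     (\<forall>y\<in>{0..1}. \<forall>x\<in>{0<..1}. ((\<lambda>z. T z y) \<longlongrightarrow> T x y) (at_left x))"

definition residual_implicator :: "(real \<Rightarrow> real \<Rightarrow> real) \<Rightarrow> real \<Rightarrow> real \<Rightarrow> real" where
  "residual_implicator T x y = Sup {\<beta> \<in> {0..1}. T x \<beta> \<le> y}"

definition residual_negation :: "(real \<Rightarrow> real \<Rightarrow> real) \<Rightarrow> real \<Rightarrow> real" where
  "residual_negation T x = residual_implicator T x 0"

text \<open>The residual triplet (T, I, N) determined by T is IMTL iff N is involutive.\<close>
definition IMTL_triplet :: "(real \<Rightarrow> real \<Rightarrow> real) \<Rightarrow> bool" where
  "IMTL_triplet T \<longleftrightarrow> left_continuous_t_norm T \<and>
     (\<forall>x\<in>{0..1}. residual_negation T (residual_negation T x) = x)"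

definition T_preorder :: "(real \<Rightarrow> real \<Rightarrow> real) \<Rightarrow> 'a set \<Rightarrow> ('a \<Rightarrow> 'a \<Rightarrow> real) \<Rightarrow> bool" where
  "T_preorder T U R \<longleftrightarrow>
     (\<forall>u\<in>U. \<forall>v\<in>U. R u v \<in> {0..1}) \<and>
     (\<forall>u\<in>U. R u u = 1) \<and>
     (\<forall>u\<in>U. \<forall>v\<in>U. \<forall>w\<in>U. T (R u v) (R v w) \<le> R u w)"

definition lor_type_loss :: "(real \<Rightarrow> real \<Rightarrow> real) \<Rightarrow> bool" where
  "lor_type_loss L \<longleftrightarrow>
     (\<forall>a. L a a = 0) \<and>
     (\<forall>a. strict_mono_on {a<..} (\<lambda>x. L x a) \<and> strict_antimono_on {..<a} (\<lambda>x. L x a)) \<and>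
     (\<forall>a. strict_mono_on {a<..} (\<lambda>x. L a x) \<and> strict_antimono_on {..<a} (\<lambda>x. L a x))"

definition symmetric_loss :: "(real \<Rightarrow> real \<Rightarrow> real) \<Rightarrow> bool" where
  "symmetric_loss L \<longleftrightarrow> (\<forall>y yh. L y yh = L yh y)"

definition duality_preserving_loss :: "(real \<Rightarrow> real) \<Rightarrow> (real \<Rightarrow> real \<Rightarrow> real) \<Rightarrow> bool" where
  "duality_preserving_loss N L \<longleftrightarrow>
     (\<forall>y\<in>{0..1}. \<forall>yh\<in>{0..1}. L y yh = L (N yh) (N y))"

definition crisp :: "'a set \<Rightarrow> 'a \<Rightarrow> real" where
  "crisp A u = (if u \<in> A then 1 else 0)"

definition feasible_P1 :: "(real \<Rightarrow> real \<Rightarrow> real) \<Rightarrow> 'a set \<Rightarrow> ('a \<Rightarrow> 'a \<Rightarrow> real) \<Rightarrow> ('a \<Rightarrow> real) \<Rightarrow> bool" where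
  "feasible_P1 T U R Ah \<longleftrightarrow>
     (\<forall>u\<in>U. \<forall>v\<in>U. T (R u v) (Ah v) \<le> Ah u) \<and> (\<forall>u\<in>U. 0 \<le> Ah u \<and> Ah u \<le> 1)"

definition obj_P1 :: "(real \<Rightarrow> real \<Rightarrow> real) \<Rightarrow> 'a set \<Rightarrow> 'a set \<Rightarrow> ('a \<Rightarrow> real) \<Rightarrow> real" where
  "obj_P1 L U A Ah = (\<Sum>u\<in>U. L (crisp A u) (Ah u))"

definition optimal_P1 where
  "optimal_P1 T L U R A Ah \<longleftrightarrow> feasible_P1 T U R Ah \<and>
     (\<forall>Ah'. feasible_P1 T U R Ah' \<longrightarrow> obj_P1 L U A Ah \<le> obj_P1 L U A Ah')"

definition value_P1 where
  "value_P1 T L U R A = Inf (obj_P1 L U A ` {Ah. feasible_P1 T U R Ah})"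

definition feasible_P2 :: "(real \<Rightarrow> real \<Rightarrow> real) \<Rightarrow> 'a set \<Rightarrow> ('a \<Rightarrow> 'a \<Rightarrow> real) \<Rightarrow> 'a set \<Rightarrow> ('a \<Rightarrow> real) \<Rightarrow> bool" where
  "feasible_P2 T U R A b \<longleftrightarrow>
     (\<forall>u\<in>A. \<forall>v\<in>U - A. T (b u) (b v) \<le> residual_negation T (R v u)) \<and>
     (\<forall>u\<in>U. 0 \<le> b u \<and> b u \<le> 1)"

definition obj_P2 :: "(real \<Rightarrow> real \<Rightarrow> real) \<Rightarrow> 'a set \<Rightarrow> ('a \<Rightarrow> real) \<Rightarrow> real" where
  "obj_P2 L U b = (\<Sum>u\<in>U. L 1 (b u))"

definition optimal_P2 where
  "optimal_P2 T L U R A b \<longleftrightarrow> feasible_P2 T U R A b \<and>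
     (\<forall>b'. feasible_P2 T U R A b' \<longrightarrow> obj_P2 L U b \<le> obj_P2 L U b')"

definition value_P2 where
  "value_P2 T L U R A = Inf (obj_P2 L U ` {b. feasible_P2 T U R A b})"

definition corr :: "(real \<Rightarrow> real \<Rightarrow> real) \<Rightarrow> 'a set \<Rightarrow> ('a \<Rightarrow> real) \<Rightarrow> 'a \<Rightarrow> real" where
  "corr T A Ah u = (if u \<in> A then Ah u else residual_negation T (Ah u))"

end

(*
  The correspondence Ah \<mapsto> corr T A Ah preserves the objective, since duality and symmetry of L
  turn L(1, N a) into L(0, a). By the IMTL law T(p, N q) \<le> N r \<longleftrightarrow> T(r, p) \<le> q, the constraints
  of (P2) on corr T A Ah say exactly that the (P1) constraints T(R v u, Ah u) \<le> Ah v hold for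
  u \<in> A and v \<notin> A; so (P1)-feasible points map to (P2)-feasible ones. Conversely, given only these
  cross constraints, the upper approximation x \<mapsto> max_{w \<in> A} T(R x w, Ah w) is (P1)-feasible by
  T-transitivity, lies above Ah on A and below Ah off A, i.e. it is closer to the crisp set A.
  A \<or>-type loss then makes it strictly better than Ah unless the two coincide, in which case Ah
  itself is (P1)-feasible.
*)

theory Submission
  imports Defs
begin

lemma t_norm_range:
  assumes "t_norm T" "x \<in> {0..1}" "y \<in> {0..1}"
  shows "T x y \<in> {0..1}"
  using assms unfolding t_norm_def by blast

lemma t_norm_commute:
  assumes "t_norm T" "x \<in> {0..1}" "y \<in> {0..1}"
  shows "T x y = T y x"
  using assms unfolding t_norm_def by blast

lemma t_norm_assoc:
  assumes "t_norm T" "x \<in> {0..1}" "y \<in> {0..1}" "z \<in> {0..1}"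
  shows "T (T x y) z = T x (T y z)"
  using assms unfolding t_norm_def by blast

lemma t_norm_mono_right:
  assumes "t_norm T" "x \<in> {0..1}" "y \<in> {0..1}" "z \<in> {0..1}" "y \<le> z"
  shows "T x y \<le> T x z"
  using assms unfolding t_norm_def by blast

lemma t_norm_mono_left:
  assumes "t_norm T" "x \<in> {0..1}" "y \<in> {0..1}" "z \<in> {0..1}" "y \<le> z"
  shows "T y x \<le> T z x"
  using assms t_norm_mono_right[of T x y z] t_norm_commute[of T x] by simp

lemma t_norm_one_right:
  assumes "t_norm T" "x \<in> {0..1}"
  shows "T x 1 = x"
  using assms unfolding t_norm_def by blast

lemma t_norm_one_left:
  assumes "t_norm T" "x \<in> {0..1}"
  shows "T 1 x = x"
  using assms t_norm_one_right[of T x] t_norm_commute[of T x 1] by simp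

lemma t_norm_zero_right:
  assumes "t_norm T" "x \<in> {0..1}"
  shows "T x 0 = 0"
proof -
  have "T x 0 = T 0 x" using assms t_norm_commute[of T x 0] by simp
  also have "\<dots> \<le> T 0 1" using assms t_norm_mono_right[of T 0 x 1] by simp
  also have "\<dots> = 0" using assms t_norm_one_right[of T 0] by simp
  finally show ?thesis using assms t_norm_range[of T x 0] by simp
qed

lemma left_continuous_t_normD:
  assumes "left_continuous_t_norm T"
  shows "t_norm T"
    and "y \<in> {0..1} \<Longrightarrow> x \<in> {0<..1} \<Longrightarrow> ((\<lambda>z. T z y) \<longlongrightarrow> T x y) (at_left x)"
  using assms unfolding left_continuous_t_norm_def by blast+

lemma residual_implicator_range:
  assumes "t_norm T" "x \<in> {0..1}" "z \<in> {0..1}"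
  shows "residual_implicator T x z \<in> {0..1}"
proof -
  let ?S = "{\<beta> \<in> {0..1}. T x \<beta> \<le> z}"
  have "0 \<in> ?S" using assms t_norm_zero_right[of T x] by auto
  then have "0 \<le> Sup ?S" and "Sup ?S \<le> 1"
    by (auto intro!: cSup_upper cSup_least bdd_aboveI[of _ 1])
  then show ?thesis unfolding residual_implicator_def by simp
qed

lemma le_residual_implicator:
  assumes "y \<in> {0..1}" "T x y \<le> z"
  shows "y \<le> residual_implicator T x z"
  unfolding residual_implicator_def using assms by (auto intro!: cSup_upper bdd_aboveI[of _ 1])

text \<open>Left continuity makes the supremum defining the residuum attained.\<close>
lemma t_norm_residual_implicator_le:
  assumes T: "left_continuous_t_norm T" and x: "x \<in> {0..1}" and z: "z \<in> {0..1}"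
  shows "T x (residual_implicator T x z) \<le> z"
proof -
  note tn = left_continuous_t_normD(1)[OF T]
  define S where "S = {\<beta> \<in> {0..1}. T x \<beta> \<le> z}"
  define s where "s = Sup S"
  have "0 \<in> S" unfolding S_def using x z t_norm_zero_right[OF tn x] by auto
  have s: "s \<in> {0..1}"
    using residual_implicator_range[OF tn x z] unfolding s_def S_def residual_implicator_def .
  show ?thesis
  proof (cases "s = 0")
    case True
    then show ?thesis
      using \<open>0 \<in> S\<close> t_norm_zero_right[OF tn x] z
      unfolding s_def S_def residual_implicator_def by auto
  next
    case False
    with s have s_pos: "0 < s" by simp
    have below: "T b x \<le> z" if "0 < b" "b < s" for b
    proof -
      obtain c where c: "c \<in> S" "b < c"
        using less_cSupD[of S b] \<open>0 \<in> S\<close> \<open>b < s\<close> unfolding s_def by blast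
      have "T b x = T x b" using that s x by (intro t_norm_commute[OF tn]) auto
      also have "\<dots> \<le> T x c" using c that x by (intro t_norm_mono_right[OF tn]) (auto simp: S_def)
      also have "\<dots> \<le> z" using c by (simp add: S_def)
      finally show ?thesis .
    qed
    have "((\<lambda>b. T b x) \<longlongrightarrow> T s x) (at_left s)"
      using left_continuous_t_normD(2)[OF T x] s s_pos by simp
    moreover have "eventually (\<lambda>b. T b x \<le> z) (at_left s)"
      using eventually_at_left_real[OF s_pos] by eventually_elim (use below in auto)
    ultimately have "T s x \<le> z" by (rule tendsto_upperbound) simp
    moreover have "T x s = T s x" using t_norm_commute[OF tn x s] .
    ultimately show ?thesis unfolding s_def S_def residual_implicator_def by simp
  qed
qed

lemma residuation:
  assumes T: "left_continuous_t_norm T" and "x \<in> {0..1}" "y \<in> {0..1}" "z \<in> {0..1}"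
  shows "T x y \<le> z \<longleftrightarrow> y \<le> residual_implicator T x z"
proof
  note tn = left_continuous_t_normD(1)[OF T]
  assume "y \<le> residual_implicator T x z"
  then have "T x y \<le> T x (residual_implicator T x z)"
    using assms residual_implicator_range[OF tn] by (intro t_norm_mono_right[OF tn]) auto
  then show "T x y \<le> z" using t_norm_residual_implicator_le[OF assms(1,2,4)] by linarith
qed (use assms le_residual_implicator in auto)

lemma residual_negation_range:
  assumes "t_norm T" "x \<in> {0..1}"
  shows "residual_negation T x \<in> {0..1}"
  unfolding residual_negation_def using assms residual_implicator_range by simp

lemma le_residual_negation_iff:
  assumes "left_continuous_t_norm T" "x \<in> {0..1}" "y \<in> {0..1}"
  shows "y \<le> residual_negation T x \<longleftrightarrow> T x y = 0"
proof -
  have "0 \<le> T x y" using t_norm_range[OF left_continuous_t_normD(1)] assms by simp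
  then show ?thesis
    unfolding residual_negation_def using residuation[OF assms, of 0] by auto
qed

lemma IMTL_tripletD:
  assumes "IMTL_triplet T"
  shows "t_norm T" "left_continuous_t_norm T"
    "x \<in> {0..1} \<Longrightarrow> residual_negation T (residual_negation T x) = x"
  using assms unfolding IMTL_triplet_def left_continuous_t_norm_def by blast+

lemma residual_negation_one:
  assumes "left_continuous_t_norm T"
  shows "residual_negation T 1 = 0"
proof -
  note tn = left_continuous_t_normD(1)[OF assms]
  have N1: "residual_negation T 1 \<in> {0..1}" using residual_negation_range[OF tn] by simp
  then have "T 1 (residual_negation T 1) = 0"
    using le_residual_negation_iff[OF assms _ N1, of 1] by simp
  then show ?thesis using t_norm_one_left[OF tn N1] by simp
qed

lemma residual_negation_le_iff:
  assumes "IMTL_triplet T" "x \<in> {0..1}" "y \<in> {0..1}"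
  shows "residual_negation T y \<le> residual_negation T x \<longleftrightarrow> x \<le> y"
proof -
  note T = IMTL_tripletD[OF assms(1)]
  let ?N = "residual_negation T"
  have Ny: "?N y \<in> {0..1}" using residual_negation_range[OF T(1) assms(3)] .
  have "?N y \<le> ?N x \<longleftrightarrow> T x (?N y) = 0" using le_residual_negation_iff[OF T(2) assms(2) Ny] .
  also have "\<dots> \<longleftrightarrow> T (?N y) x = 0" using t_norm_commute[OF T(1) assms(2) Ny] by simp
  also have "\<dots> \<longleftrightarrow> x \<le> ?N (?N y)" using le_residual_negation_iff[OF T(2) Ny assms(2)] by simp
  finally show ?thesis using T(3)[OF assms(3)] by simp
qed

lemma t_norm_residual_negation_le_iff:
  assumes "IMTL_triplet T" "p \<in> {0..1}" "q \<in> {0..1}" "r \<in> {0..1}"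
  shows "T p (residual_negation T q) \<le> residual_negation T r \<longleftrightarrow> T r p \<le> q"
proof -
  note T = IMTL_tripletD[OF assms(1)]
  let ?N = "residual_negation T"
  have Nq: "?N q \<in> {0..1}" using residual_negation_range[OF T(1) assms(3)] .
  have Trp: "T r p \<in> {0..1}" using t_norm_range[OF T(1) assms(4,2)] .
  have "T p (?N q) \<le> ?N r \<longleftrightarrow> T r (T p (?N q)) = 0"
    using le_residual_negation_iff[OF T(2) assms(4)] t_norm_range[OF T(1) assms(2) Nq] by simp
  also have "\<dots> \<longleftrightarrow> T (T r p) (?N q) = 0" using t_norm_assoc[OF T(1) assms(4,2) Nq] by simp
  also have "\<dots> \<longleftrightarrow> ?N q \<le> ?N (T r p)" using le_residual_negation_iff[OF T(2) Trp Nq] by simp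
  also have "\<dots> \<longleftrightarrow> T r p \<le> q" using residual_negation_le_iff[OF assms(1) Trp assms(3)] .
  finally show ?thesis .
qed

lemma T_preorderD:
  assumes "T_preorder T U R" "u \<in> U" "v \<in> U"
  shows "R u v \<in> {0..1}" and "R u u = 1"
    and "w \<in> U \<Longrightarrow> T (R u v) (R v w) \<le> R u w"
  using assms unfolding T_preorder_def by blast+

lemma lor_type_loss_strict_antimono_on_atMost:
  assumes "lor_type_loss L" "\<forall>x y. 0 \<le> L x y"
  shows "strict_antimono_on {..a} (L a)"
proof (rule monotone_onI)
  fix x y assume xy: "x \<in> {..a}" "y \<in> {..a}" "x < y"
  have anti: "strict_antimono_on {..<a} (L a)" using assms(1) unfolding lor_type_loss_def by blast
  show "L a y < L a x"
  proof (cases "y < a")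
    case True
    then show ?thesis using monotone_onD[OF anti, of x y] xy by simp
  next
    case False
    then have "y = a" using xy by simp
    moreover have "L a ((x + a) / 2) < L a x"
      using monotone_onD[OF anti, of x "(x + a) / 2"] xy \<open>y = a\<close> by simp
    moreover have "L a a = 0" using assms(1) unfolding lor_type_loss_def by blast
    ultimately show ?thesis using assms(2) by (metis order.strict_trans1)
  qed
qed

lemma lor_type_loss_strict_mono_on_atLeast:
  assumes "lor_type_loss L" "\<forall>x y. 0 \<le> L x y"
  shows "strict_mono_on {a..} (L a)"
proof (rule monotone_onI)
  fix x y assume xy: "x \<in> {a..}" "y \<in> {a..}" "x < y"
  have mono: "strict_mono_on {a<..} (L a)" using assms(1) unfolding lor_type_loss_def by blast
  show "L a x < L a y"
  proof (cases "a < x")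
    case True
    then show ?thesis using monotone_onD[OF mono, of x y] xy by simp
  next
    case False
    then have "x = a" using xy by simp
    moreover have "L a ((a + y) / 2) < L a y"
      using monotone_onD[OF mono, of "(a + y) / 2" y] xy \<open>x = a\<close> by simp
    moreover have "L a a = 0" using assms(1) unfolding lor_type_loss_def by blast
    ultimately show ?thesis using assms(2) by (metis order.strict_trans1)
  qed
qed

lemma obj_P1_le_if_closer_to_crisp:
  assumes U: "finite U" and loss: "lor_type_loss L" "\<forall>x y. 0 \<le> L x y"
    and in_A: "\<And>u. u \<in> U \<inter> A \<Longrightarrow> h u \<le> g u \<and> g u \<le> 1"
    and off_A: "\<And>u. u \<in> U - A \<Longrightarrow> 0 \<le> g u \<and> g u \<le> h u"
  shows "obj_P1 L U A g \<le> obj_P1 L U A h"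
    and "obj_P1 L U A g = obj_P1 L U A h \<Longrightarrow> \<forall>u\<in>U. g u = h u"
proof -
  have lt: "L (crisp A u) (g u) < L (crisp A u) (h u)" if u: "u \<in> U" and ne: "g u \<noteq> h u" for u
  proof (cases "u \<in> A")
    case True
    with in_A[of u] u ne have "h u < g u" "g u \<le> 1" by auto
    then show ?thesis
      using monotone_onD[OF lor_type_loss_strict_antimono_on_atMost[OF loss, of 1], of "h u" "g u"] True
      by (simp add: crisp_def)
  next
    case False
    with off_A[of u] u ne have "0 \<le> g u" "g u < h u" by auto
    then show ?thesis
      using monotone_onD[OF lor_type_loss_strict_mono_on_atLeast[OF loss, of 0], of "g u" "h u"] False
      by (simp add: crisp_def)
  qed
  then have le: "L (crisp A u) (g u) \<le> L (crisp A u) (h u)" if "u \<in> U" for u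
    using that by fastforce
  show "obj_P1 L U A g \<le> obj_P1 L U A h" unfolding obj_P1_def using le by (rule sum_mono)
  show "\<forall>u\<in>U. g u = h u" if eq: "obj_P1 L U A g = obj_P1 L U A h"
  proof (rule ccontr)
    assume "\<not> (\<forall>u\<in>U. g u = h u)"
    then have "obj_P1 L U A g < obj_P1 L U A h"
      unfolding obj_P1_def using U le lt by (intro sum_strict_mono_ex1) auto
    with eq show False by simp
  qed
qed

lemma feasible_P1_range: "feasible_P1 T U R Ah \<Longrightarrow> Ah ` U \<subseteq> {0..1}"
  unfolding feasible_P1_def by auto

lemma loss_one_residual_negation:
  assumes T: "IMTL_triplet T"
    and loss: "duality_preserving_loss (residual_negation T) L" "symmetric_loss L"
    and a: "a \<in> {0..1}"
  shows "L 1 (residual_negation T a) = L 0 a"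
proof -
  let ?N = "residual_negation T"
  have "?N a \<in> {0..1}" using residual_negation_range[OF IMTL_tripletD(1)[OF T] a] .
  then have "L 1 (?N a) = L (?N (?N a)) (?N 1)"
    using loss(1) unfolding duality_preserving_loss_def by (meson atLeastAtMost_iff order_refl zero_le_one)
  also have "\<dots> = L a 0" using IMTL_tripletD(3)[OF T a] residual_negation_one[OF IMTL_tripletD(2)[OF T]] by simp
  also have "\<dots> = L 0 a" using loss(2) unfolding symmetric_loss_def by blast
  finally show ?thesis .
qed

lemma obj_P2_corr:
  assumes "IMTL_triplet T" "duality_preserving_loss (residual_negation T) L" "symmetric_loss L"
    and "Ah ` U \<subseteq> {0..1}"
  shows "obj_P2 L U (corr T A Ah) = obj_P1 L U A Ah"
  unfolding obj_P2_def obj_P1_def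
  using assms loss_one_residual_negation[OF assms(1-3)] by (intro sum.cong) (auto simp: corr_def crisp_def)

lemma corr_range:
  assumes "t_norm T" "b ` U \<subseteq> {0..1}"
  shows "corr T A b ` U \<subseteq> {0..1}"
  using assms residual_negation_range unfolding corr_def by auto

lemma corr_corr:
  assumes "IMTL_triplet T" "b u \<in> {0..1}"
  shows "corr T A (corr T A b) u = b u"
  using assms IMTL_tripletD(3) unfolding corr_def by simp

lemma feasible_P2_cong:
  assumes "A \<subseteq> U" "\<And>u. u \<in> U \<Longrightarrow> b u = b' u"
  shows "feasible_P2 T U R A b \<longleftrightarrow> feasible_P2 T U R A b'"
  using assms unfolding feasible_P2_def by (simp add: subset_eq)

lemma feasible_P2_corr_iff:
  assumes T: "IMTL_triplet T" and R: "T_preorder T U R" and "A \<subseteq> U" and Ah: "Ah ` U \<subseteq> {0..1}"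
  shows "feasible_P2 T U R A (corr T A Ah) \<longleftrightarrow> (\<forall>u\<in>A. \<forall>v\<in>U - A. T (R v u) (Ah u) \<le> Ah v)"
proof -
  have "T (corr T A Ah u) (corr T A Ah v) \<le> residual_negation T (R v u) \<longleftrightarrow> T (R v u) (Ah u) \<le> Ah v"
    if "u \<in> A" "v \<in> U - A" for u v
  proof -
    have "u \<in> U" "v \<in> U" using that \<open>A \<subseteq> U\<close> by auto
    then have "Ah u \<in> {0..1}" "Ah v \<in> {0..1}" "R v u \<in> {0..1}" using Ah T_preorderD(1)[OF R] by auto
    then show ?thesis
      using that t_norm_residual_negation_le_iff[OF T, of "Ah u" "Ah v" "R v u"] unfolding corr_def by simp
  qed
  moreover have "corr T A Ah ` U \<subseteq> {0..1}" using corr_range[OF IMTL_tripletD(1)[OF T] Ah] .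
  ultimately show ?thesis unfolding feasible_P2_def by auto
qed

text \<open>The fuzzy-rough upper approximation of the restriction of \<open>Ah\<close> to \<open>A\<close>; the \<open>0\<close> only
  makes the maximum well defined when \<open>A = {}\<close>.\<close>
definition upper_approx :: "(real \<Rightarrow> real \<Rightarrow> real) \<Rightarrow> ('a \<Rightarrow> 'a \<Rightarrow> real) \<Rightarrow> 'a set \<Rightarrow> ('a \<Rightarrow> real) \<Rightarrow> 'a \<Rightarrow> real"
  where "upper_approx T R A Ah x = Max (insert 0 ((\<lambda>w. T (R x w) (Ah w)) ` A))"

lemma upper_approx_le_iff:
  assumes "finite A"
  shows "upper_approx T R A Ah x \<le> c \<longleftrightarrow> 0 \<le> c \<and> (\<forall>w\<in>A. T (R x w) (Ah w) \<le> c)"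
  unfolding upper_approx_def using assms by simp

lemma upper_approx_ge:
  assumes "finite A" "w \<in> A"
  shows "T (R x w) (Ah w) \<le> upper_approx T R A Ah x"
  unfolding upper_approx_def using assms by (intro Max_ge) auto

lemma upper_approx_cases:
  assumes "finite A"
  obtains "upper_approx T R A Ah x = 0"
    | w where "w \<in> A" "upper_approx T R A Ah x = T (R x w) (Ah w)"
  using Max_in[of "insert 0 ((\<lambda>w. T (R x w) (Ah w)) ` A)"] assms
  unfolding upper_approx_def by auto

lemma upper_approx_range:
  assumes T: "t_norm T" and R: "T_preorder T U R" and A: "finite A" "A \<subseteq> U"
    and Ah: "Ah ` A \<subseteq> {0..1}" and x: "x \<in> U"
  shows "upper_approx T R A Ah x \<in> {0..1}"
proof -
  have "T (R x w) (Ah w) \<le> 1" if "w \<in> A" for w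
  proof -
    have "R x w \<in> {0..1}" using T_preorderD(1)[OF R x] that A by auto
    then show ?thesis using t_norm_range[OF T _, of "R x w" "Ah w"] that Ah by auto
  qed
  then have "upper_approx T R A Ah x \<le> 1" using upper_approx_le_iff[OF A(1)] by simp
  moreover have "0 \<le> upper_approx T R A Ah x" unfolding upper_approx_def using A(1) by (intro Max_ge) auto
  ultimately show ?thesis by simp
qed

lemma le_upper_approx:
  assumes T: "t_norm T" and R: "T_preorder T U R" and A: "finite A" "A \<subseteq> U"
    and Ah: "Ah ` A \<subseteq> {0..1}" and x: "x \<in> A"
  shows "Ah x \<le> upper_approx T R A Ah x"
proof -
  have "R x x = 1" using T_preorderD(2)[OF R] x A by blast
  then have "Ah x = T (R x x) (Ah x)" using t_norm_one_left[OF T, of "Ah x"] x Ah by auto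
  also have "\<dots> \<le> upper_approx T R A Ah x" using A(1) x by (rule upper_approx_ge)
  finally show ?thesis .
qed

lemma feasible_P1_upper_approx:
  assumes T: "t_norm T" and R: "T_preorder T U R" and A: "finite A" "A \<subseteq> U"
    and Ah: "Ah ` A \<subseteq> {0..1}"
  shows "feasible_P1 T U R (upper_approx T R A Ah)"
  unfolding feasible_P1_def
proof (intro conjI ballI)
  note R_range = T_preorderD(1)[OF R]
  fix u v assume u: "u \<in> U" and v: "v \<in> U"
  have range_u: "upper_approx T R A Ah u \<in> {0..1}" using upper_approx_range[OF assms u] .
  show "T (R u v) (upper_approx T R A Ah v) \<le> upper_approx T R A Ah u"
  proof (cases rule: upper_approx_cases[OF A(1), of T R Ah v])
    case 1
    then show ?thesis using t_norm_zero_right[OF T R_range[OF u v]] range_u by simp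
  next
    case (2 w)
    then have w: "w \<in> U" "Ah w \<in> {0..1}" using A Ah by auto
    have "T (R u v) (T (R v w) (Ah w)) = T (T (R u v) (R v w)) (Ah w)"
      using t_norm_assoc[OF T] R_range u v w by simp
    also have "\<dots> \<le> T (R u w) (Ah w)"
      using T_preorderD(3)[OF R u v w(1)] R_range u v w t_norm_range[OF T]
      by (intro t_norm_mono_left[OF T]) auto
    also have "\<dots> \<le> upper_approx T R A Ah u" using upper_approx_ge[OF A(1) \<open>w \<in> A\<close>] .
    finally show ?thesis using 2 by simp
  qed
next
  fix u assume "u \<in> U"
  then show "0 \<le> upper_approx T R A Ah u" "upper_approx T R A Ah u \<le> 1"
    using upper_approx_range[OF assms] by auto
qed

lemma cInf_eq_if_dominated:
  fixes S S' :: "'b::conditionally_complete_lattice set"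
  assumes "S \<noteq> {}" "S \<subseteq> S'" "bdd_below S'" "\<And>y. y \<in> S' \<Longrightarrow> \<exists>x\<in>S. x \<le> y"
  shows "Inf S = Inf S'"
proof (rule antisym)
  have "bdd_below S" using assms(3,2) by (rule bdd_below_mono)
  show "Inf S \<le> Inf S'"
  proof (rule cInf_greatest)
    show "S' \<noteq> {}" using assms(1,2) by blast
    fix y assume "y \<in> S'"
    then obtain x where "x \<in> S" "x \<le> y" using assms(4) by blast
    then show "Inf S \<le> y" using cInf_lower[OF _ \<open>bdd_below S\<close>] order.trans by blast
  qed
  show "Inf S' \<le> Inf S" using assms(1,3,2) by (rule cInf_superset_mono)
qed

locale crisp_approximation =
  fixes T :: "real \<Rightarrow> real \<Rightarrow> real" and U A :: "'a set"
    and R :: "'a \<Rightarrow> 'a \<Rightarrow> real" and L :: "real \<Rightarrow> real \<Rightarrow> real"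
  assumes finite_U: "finite U"
    and IMTL: "IMTL_triplet T"
    and preorder: "T_preorder T U R"
    and A_subset: "A \<subseteq> U"
    and L_nonneg: "\<forall>x y. L x y \<ge> 0"
    and lor: "lor_type_loss L"
    and duality: "duality_preserving_loss (residual_negation T) L"
    and symmetric: "symmetric_loss L"
begin

lemmas obj_P2_corr_eq = obj_P2_corr[OF IMTL duality symmetric, where U = U and A = A]

lemma feasible_P2_corr: "feasible_P1 T U R Ah \<Longrightarrow> feasible_P2 T U R A (corr T A Ah)"
  using feasible_P2_corr_iff[OF IMTL preorder A_subset feasible_P1_range] A_subset
  unfolding feasible_P1_def by blast

lemma upper_approx_improves:
  assumes Ah: "Ah ` U \<subseteq> {0..1}" and feasible: "feasible_P2 T U R A (corr T A Ah)"
  shows "feasible_P1 T U R (upper_approx T R A Ah)"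
    and "obj_P1 L U A (upper_approx T R A Ah) \<le> obj_P1 L U A Ah"
    and "obj_P1 L U A (upper_approx T R A Ah) = obj_P1 L U A Ah \<Longrightarrow> feasible_P1 T U R Ah"
proof -
  note T = IMTL_tripletD(1)[OF IMTL]
  have finite_A: "finite A" using A_subset finite_U by (rule finite_subset)
  have Ah_A: "Ah ` A \<subseteq> {0..1}" using Ah A_subset by auto
  note approx = T preorder finite_A A_subset Ah_A
  show "feasible_P1 T U R (upper_approx T R A Ah)" using feasible_P1_upper_approx[OF approx] .
  have in_A: "Ah u \<le> upper_approx T R A Ah u \<and> upper_approx T R A Ah u \<le> 1" if "u \<in> U \<inter> A" for u
    using le_upper_approx[OF approx] upper_approx_range[OF approx] that by auto
  have off_A: "0 \<le> upper_approx T R A Ah u \<and> upper_approx T R A Ah u \<le> Ah u" if "u \<in> U - A" for u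
    using feasible feasible_P2_corr_iff[OF IMTL preorder A_subset Ah] upper_approx_le_iff[OF finite_A]
      upper_approx_range[OF approx] Ah that by auto
  note closer = obj_P1_le_if_closer_to_crisp[where A = A and g = "upper_approx T R A Ah" and h = Ah,
      OF finite_U lor L_nonneg in_A off_A]
  show "obj_P1 L U A (upper_approx T R A Ah) \<le> obj_P1 L U A Ah" using closer(1) .
  assume "obj_P1 L U A (upper_approx T R A Ah) = obj_P1 L U A Ah"
  with closer(2) show "feasible_P1 T U R Ah"
    using feasible_P1_upper_approx[OF approx] unfolding feasible_P1_def by simp
qed

lemma feasible_P2_dominated:
  assumes "feasible_P2 T U R A b"
  obtains Ah where "feasible_P1 T U R Ah" "obj_P1 L U A Ah \<le> obj_P2 L U b"
proof -
  have b: "b ` U \<subseteq> {0..1}" using assms unfolding feasible_P2_def by auto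
  define Ah where "Ah = corr T A b"
  have Ah_range: "Ah ` U \<subseteq> {0..1}" unfolding Ah_def using corr_range[OF IMTL_tripletD(1)[OF IMTL] b] .
  have corr_Ah: "corr T A Ah u = b u" if "u \<in> U" for u
    unfolding Ah_def using b that by (intro corr_corr[OF IMTL]) auto
  have "feasible_P2 T U R A (corr T A Ah)" using assms feasible_P2_cong[OF A_subset corr_Ah] by simp
  moreover have "obj_P1 L U A Ah = obj_P2 L U b"
    using obj_P2_corr_eq[OF Ah_range] corr_Ah unfolding obj_P2_def by simp
  ultimately show thesis using that upper_approx_improves[OF Ah_range] by fastforce
qed

lemma value_P1_eq_value_P2: "value_P1 T L U R A = value_P2 T L U R A"
  unfolding value_P1_def value_P2_def
proof (rule cInf_eq_if_dominated)
  have "feasible_P1 T U R (\<lambda>_. 0)"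
    using t_norm_zero_right[OF IMTL_tripletD(1)[OF IMTL]] T_preorderD(1)[OF preorder]
    unfolding feasible_P1_def by auto
  then show "obj_P1 L U A ` {Ah. feasible_P1 T U R Ah} \<noteq> {}" by blast
  show "obj_P1 L U A ` {Ah. feasible_P1 T U R Ah} \<subseteq> obj_P2 L U ` {b. feasible_P2 T U R A b}"
    using feasible_P2_corr obj_P2_corr_eq[OF feasible_P1_range] by (auto intro!: image_eqI)
  show "bdd_below (obj_P2 L U ` {b. feasible_P2 T U R A b})"
    using L_nonneg unfolding obj_P2_def by (intro bdd_belowI[of _ 0]) (auto intro: sum_nonneg)
  show "\<exists>x\<in>obj_P1 L U A ` {Ah. feasible_P1 T U R Ah}. x \<le> y"
    if "y \<in> obj_P2 L U ` {b. feasible_P2 T U R A b}" for y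
    using that feasible_P2_dominated by blast
qed

lemma optimal_P1_iff_optimal_P2_corr:
  assumes Ah: "Ah ` U \<subseteq> {0..1}"
  shows "optimal_P1 T L U R A Ah \<longleftrightarrow> optimal_P2 T L U R A (corr T A Ah)"
proof
  assume opt: "optimal_P1 T L U R A Ah"
  show "optimal_P2 T L U R A (corr T A Ah)"
    unfolding optimal_P2_def
  proof (intro conjI allI impI)
    show "feasible_P2 T U R A (corr T A Ah)" using opt feasible_P2_corr unfolding optimal_P1_def by blast
    fix b assume "feasible_P2 T U R A b"
    then obtain Ah' where "feasible_P1 T U R Ah'" "obj_P1 L U A Ah' \<le> obj_P2 L U b"
      by (rule feasible_P2_dominated)
    then show "obj_P2 L U (corr T A Ah) \<le> obj_P2 L U b"
      using opt obj_P2_corr_eq[OF Ah] unfolding optimal_P1_def by force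
  qed
next
  assume opt: "optimal_P2 T L U R A (corr T A Ah)"
  have minimal: "obj_P1 L U A Ah \<le> obj_P1 L U A Ah'" if "feasible_P1 T U R Ah'" for Ah'
    using opt that feasible_P2_corr obj_P2_corr_eq[OF Ah] obj_P2_corr_eq[OF feasible_P1_range[OF that]]
    unfolding optimal_P2_def by metis
  have "feasible_P2 T U R A (corr T A Ah)" using opt unfolding optimal_P2_def by blast
  note improved = upper_approx_improves[OF Ah this]
  have "obj_P1 L U A (upper_approx T R A Ah) = obj_P1 L U A Ah"
    using improved(2) minimal[OF improved(1)] by simp
  then have "feasible_P1 T U R Ah" by (rule improved(3))
  with minimal show "optimal_P1 T L U R A Ah" unfolding optimal_P1_def by blast
qed

end

theorem proposition8:
  fixes U A :: "'a set" and T :: "real \<Rightarrow> real \<Rightarrow> real"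
    and R :: "'a \<Rightarrow> 'a \<Rightarrow> real" and L :: "real \<Rightarrow> real \<Rightarrow> real"
  assumes "finite U"
    and "IMTL_triplet T"
    and "T_preorder T U R"
    and "A \<subseteq> U"
    and "\<forall>x y. L x y \<ge> 0"
    and "lor_type_loss L"
    and "duality_preserving_loss (residual_negation T) L"
    and "symmetric_loss L"
  shows "value_P1 T L U R A = value_P2 T L U R A \<and>
         (\<forall>Ah. (\<forall>u\<in>U. 0 \<le> Ah u \<and> Ah u \<le> 1) \<longrightarrow>
            (optimal_P1 T L U R A Ah \<longleftrightarrow> optimal_P2 T L U R A (corr T A Ah)))"
proof -
  interpret crisp_approximation T U A R L
    using assms by unfold_locales
  show ?thesis
    using value_P1_eq_value_P2 optimal_P1_iff_optimal_P2_corr by (auto simp: image_subset_iff)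
qed

end
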